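(* In an inventory system as in the context, every admissible policy $\pi$ satisfies $J_\pi(0)\ge N\,G(M)$, where $M=\frac{\Delta+\sum_{k=0}^{N-1}\mu_k}{N}$. In particular $J^*(0)\ge N\,G(M)$.
   Context: Inventory system: $N\ge1$; $G:\mathbb{R}_{\ge0}\to\mathbb{R}_{\ge0}$ is strictly convex and increasing with $G(0)=0$. Demands $w_0,\dots,w_{N-1}$ are independent random variables; $w_k$ has mean $\mu_k$, variance $\sigma_k^2$, and support exactly $[\mu_k-\Delta,\mu_k+\Delta]$, where $\Delta\ge0$ and $\mu_k-\Delta>0$ for all $k$. A (Markov) policy is a sequence $\pi=(\pi_0,\dots,\pi_{N-1})$ of measurable maps $\pi_k:\mathbb{R}_{\ge0}\to\mathbb{R}_{\ge0}$; the state evolves by $x_0=0$, $x_{k+1}=x_k+\pi_k(x_k)-w_k$. A policy is admissible if $x_k\ge0$ almost surely for all $k\in\{1,\dots,N\}$. Its expected cost is $J_\pi(0)=\sum_{k=0}^{N-1}\mathbb{E}[G(\pi_k(x_k))]$, and $J^*(0)$ is the infimum of $J_\pi(0)$ over admissible policies. *)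

theory Defs
  imports "HOL-Probability.Probability"
begin

definition strict_convex_on :: "real set \<Rightarrow> (real \<Rightarrow> real) \<Rightarrow> bool" where
  "strict_convex_on S f \<longleftrightarrow> convex S \<and>
    (\<forall>x\<in>S. \<forall>y\<in>S. \<forall>u. x \<noteq> y \<and> 0 < u \<and> u < 1 \<longrightarrow>
        f (u * x + (1 - u) * y) < u * f x + (1 - u) * f y)"

definition rv_support :: "'a measure \<Rightarrow> ('a \<Rightarrow> real) \<Rightarrow> real set" where
  "rv_support M X = {x. \<forall>e>0. 0 < measure M {\<omega>\<in>space M. \<bar>X \<omega> - x\<bar> < e}}"

fun state :: "(nat \<Rightarrow> real \<Rightarrow> real) \<Rightarrow> (nat \<Rightarrow> 'a \<Rightarrow> real) \<Rightarrow> nat \<Rightarrow> 'a \<Rightarrow> real" where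
  "state pol w 0 \<omega> = 0"
| "state pol w (Suc k) \<omega> = state pol w k \<omega> + pol k (state pol w k \<omega>) - w k \<omega>"

text \<open>A Markov policy: for k < N, a Borel map pi_k with pi_k(x) >= 0 for x >= 0
  (only its restriction to the nonnegative reals matters).\<close>
definition is_policy :: "nat \<Rightarrow> (nat \<Rightarrow> real \<Rightarrow> real) \<Rightarrow> bool" where
  "is_policy N pol \<longleftrightarrow> (\<forall>k<N. pol k \<in> borel_measurable borel \<and> (\<forall>x\<ge>0. pol k x \<ge> 0))"

definition admissible :: "'a measure \<Rightarrow> (nat \<Rightarrow> 'a \<Rightarrow> real) \<Rightarrow> nat \<Rightarrow> (nat \<Rightarrow> real \<Rightarrow> real) \<Rightarrow> bool" where
  "admissible M w N pol \<longleftrightarrow> is_policy N pol \<and>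
     (\<forall>k\<in>{1..N}. AE \<omega> in M. state pol w k \<omega> \<ge> 0)"

text \<open>Expected cost J_pi(0) (in [0,\<infinity>], since G >= 0).\<close>
definition cost :: "'a measure \<Rightarrow> (real \<Rightarrow> real) \<Rightarrow> (nat \<Rightarrow> 'a \<Rightarrow> real) \<Rightarrow> nat \<Rightarrow> (nat \<Rightarrow> real \<Rightarrow> real) \<Rightarrow> ennreal" where
  "cost M G w N pol = (\<Sum>k<N. \<integral>\<^sup>+ \<omega>. ennreal (G (pol k (state pol w k \<omega>))) \<partial>M)"

definition opt_cost :: "'a measure \<Rightarrow> (real \<Rightarrow> real) \<Rightarrow> (nat \<Rightarrow> 'a \<Rightarrow> real) \<Rightarrow> nat \<Rightarrow> ennreal" where
  "opt_cost M G w N = (INF pol \<in> {pol. admissible M w N pol}. cost M G w N pol)"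

end

theory Submission
  imports Defs
begin

(* Let u_k be the quantity ordered at stage k and Y = x_(N-1) + u_(N-1) the stock available before
   the last demand. Y is a function of w_0, ..., w_(N-2), hence independent of w_(N-1), and
   admissibility gives Y >= w_(N-1) almost surely; independence then forces Y >= mu_(N-1) + Delta,
   the top of the support of w_(N-1). Taking expectations, E(u_0 + ... + u_(N-1)) >= N M.
   Jensen's inequality for each stage and convexity across stages give
   J >= sum_k G(E u_k) >= N G(M), where G is extended by G(0) to negative arguments so that
   it becomes convex and monotone on the whole line. If some stage cost has infinite expectation
   there is nothing to prove; otherwise the orders are integrable, since G grows at least
   linearly. *)

lemma strict_convex_on_imp_convex_on:
  assumes "strict_convex_on S f"
  shows "convex_on S f"
proof (rule convex_onI)
  fix t :: real and x y assume t: "0 < t" "t < 1" and xy: "x \<in> S" "y \<in> S"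
  show "f ((1 - t) *\<^sub>R x + t *\<^sub>R y) \<le> (1 - t) * f x + t * f y"
  proof (cases "x = y")
    case True
    then show ?thesis by (simp add: algebra_simps)
  next
    case False
    with assms t xy have "f ((1 - t) * x + (1 - (1 - t)) * y) < (1 - t) * f x + (1 - (1 - t)) * f y"
      by (intro assms[unfolded strict_convex_on_def, THEN conjunct2, rule_format]) auto
    then show ?thesis by simp
  qed
qed (use assms in \<open>simp add: strict_convex_on_def\<close>)

lemma convex_on_comp_max_zero:
  fixes f :: "real \<Rightarrow> real"
  assumes convex: "convex_on {0..} f" and mono: "mono_on {0..} f"
  shows "convex_on UNIV (\<lambda>x. f (max x 0))"
proof (rule convex_onI)
  fix t x y :: real assume t: "0 < t" "t < 1"
  have "max ((1 - t) *\<^sub>R x + t *\<^sub>R y) 0 \<le> (1 - t) * max x 0 + t * max y 0"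
    using t by (auto intro!: add_mono mult_left_mono)
  then have "f (max ((1 - t) *\<^sub>R x + t *\<^sub>R y) 0) \<le> f ((1 - t) *\<^sub>R max x 0 + t *\<^sub>R max y 0)"
    using t by (intro mono_onD[OF mono]) auto
  also have "\<dots> \<le> (1 - t) * f (max x 0) + t * f (max y 0)"
    using t by (intro convex_onD[OF convex]) auto
  finally show "f (max ((1 - t) *\<^sub>R x + t *\<^sub>R y) 0) \<le> (1 - t) * f (max x 0) + t * f (max y 0)" .
qed simp

lemma convex_on_ge_linear:
  fixes f :: "real \<Rightarrow> real"
  assumes "convex_on {0..} f" "f 0 = 0" "1 \<le> x"
  shows "x * f 1 \<le> f x"
proof -
  have "f ((1 - 1 / x) *\<^sub>R 0 + (1 / x) *\<^sub>R x) \<le> (1 - 1 / x) * f 0 + (1 / x) * f x"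
    using assms by (intro convex_onD) auto
  with assms show ?thesis by (simp add: field_simps)
qed

lemma sum_convex_mono_ge_mean:
  fixes f :: "real \<Rightarrow> real" and a :: "'i \<Rightarrow> real"
  assumes convex: "convex_on UNIV f" and mono: "mono f" and I: "finite I" "I \<noteq> {}"
    and s: "s \<le> (\<Sum>i\<in>I. a i)"
  shows "card I * f (s / card I) \<le> (\<Sum>i\<in>I. f (a i))"
proof -
  have card: "0 < real (card I)"
    using I by (simp add: card_gt_0_iff)
  have "f (s / card I) \<le> f (\<Sum>i\<in>I. (1 / card I) *\<^sub>R a i)"
    using mono s card by (simp add: monoD divide_right_mono sum_divide_distrib[symmetric])
  also have "\<dots> \<le> (\<Sum>i\<in>I. (1 / card I) * f (a i))"
    using card by (intro convex_on_sum[OF I convex]) (auto simp: sum_divide_distrib[symmetric])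
  also have "\<dots> = (\<Sum>i\<in>I. f (a i)) / card I"
    by (simp add: sum_divide_distrib)
  finally show ?thesis
    using card by (simp add: pos_le_divide_eq mult.commute)
qed

lemma (in prob_space) integrable_if_convex_comp_integrable:
  fixes f :: "real \<Rightarrow> real"
  assumes f: "convex_on {0..} f" "f 0 = 0" "0 < f 1" "\<And>x. 0 \<le> x \<Longrightarrow> 0 \<le> f x"
    and X: "X \<in> borel_measurable M" "AE \<omega> in M. 0 \<le> X \<omega>" "integrable M (\<lambda>\<omega>. f (X \<omega>))"
  shows "integrable M X"
proof (rule Bochner_Integration.integrable_bound)
  show "integrable M (\<lambda>\<omega>. 1 + f (X \<omega>) / f 1)"
    using X by auto
  have "x \<le> 1 + f x / f 1" if "0 \<le> x" for x
  proof (cases "x \<le> 1")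
    case True
    have "0 \<le> f x / f 1"
      using f(3,4) that by simp
    with True show ?thesis by linarith
  next
    case False
    with convex_on_ge_linear[OF f(1,2), of x] f(3) show ?thesis by (simp add: field_simps)
  qed
  with X(2) f(3,4) show "AE \<omega> in M. norm (X \<omega>) \<le> norm (1 + f (X \<omega>) / f 1)"
    by (auto elim!: eventually_mono)
qed (use X in auto)

lemma (in prob_space) AE_ge_support_if_indep_le:
  assumes indep: "indep_var borel Y borel X" and le: "AE \<omega> in M. X \<omega> \<le> Y \<omega>"
    and c: "c \<in> rv_support M X"
  shows "AE \<omega> in M. c \<le> Y \<omega>"
proof -
  have Y: "Y \<in> borel_measurable M" and X: "X \<in> borel_measurable M"
    using indep_var_rv1[OF indep] indep_var_rv2[OF indep] by auto
  have below: "AE \<omega> in M. a \<le> Y \<omega>" if "a < c" for a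
  proof -
    define A where "A = Y -` {..<a} \<inter> space M"
    define B where "B = X -` {a<..} \<inter> space M"
    have "0 < measure M {\<omega>\<in>space M. \<bar>X \<omega> - c\<bar> < c - a}"
      using c \<open>a < c\<close> unfolding rv_support_def by auto
    also have "\<dots> \<le> prob B"
      using X unfolding B_def by (intro finite_measure_mono) auto
    finally have "prob B \<noteq> 0" by simp
    have "prob A * prob B = prob ((\<lambda>\<omega>. (Y \<omega>, X \<omega>)) -` ({..<a} \<times> {a<..}) \<inter> space M)"
      unfolding A_def B_def by (rule indep_varD[OF indep, symmetric]) auto
    also have "\<dots> = 0"
      using le Y X by (subst prob_eq_0) (auto elim!: eventually_mono)
    finally have "prob A = 0"
      using \<open>prob B \<noteq> 0\<close> by simp
    then show ?thesis
      using Y unfolding A_def by (subst (asm) prob_eq_0) (auto elim!: eventually_mono)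
  qed
  have "AE \<omega> in M. \<forall>n::nat. 0 < n \<longrightarrow> c - inverse n \<le> Y \<omega>"
    by (intro AE_all_countable[THEN iffD2] allI AE_impI below) auto
  then show ?thesis
  proof eventually_elim
    case (elim \<omega>)
    show "c \<le> Y \<omega>"
    proof (rule field_le_epsilon)
      fix e :: real assume "0 < e"
      then obtain n :: nat where "0 < n" "inverse n < e"
        using ex_inverse_of_nat_less by blast
      then show "c \<le> Y \<omega> + e"
        using elim[rule_format, of n] by linarith
    qed
  qed
qed

definition order_qty :: "(nat \<Rightarrow> real \<Rightarrow> real) \<Rightarrow> (nat \<Rightarrow> 'a \<Rightarrow> real) \<Rightarrow> nat \<Rightarrow> 'a \<Rightarrow> real" where
  "order_qty pol w k \<omega> = pol k (state pol w k \<omega>)"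

lemma state_eq_sum: "state pol w k \<omega> = (\<Sum>i<k. order_qty pol w i \<omega> - w i \<omega>)"
  by (induction k) (auto simp: order_qty_def)

lemma state_measurable:
  assumes "\<And>i. i < k \<Longrightarrow> pol i \<in> borel_measurable borel"
    and "\<And>i. i < k \<Longrightarrow> w i \<in> borel_measurable M"
  shows "state pol w k \<in> borel_measurable M"
  using assms
proof (induction k)
  case 0
  have "state pol w 0 = (\<lambda>_. 0)"
    by (simp add: fun_eq_iff)
  then show ?case by simp
next
  case (Suc k)
  have "state pol w k \<in> borel_measurable M"
    by (rule Suc.IH) (auto intro: Suc.prems)
  moreover have "pol k \<in> borel_measurable borel" "w k \<in> borel_measurable M"
    by (auto intro: Suc.prems)
  moreover have "state pol w (Suc k) = (\<lambda>\<omega>. state pol w k \<omega> + pol k (state pol w k \<omega>) - w k \<omega>)"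
    by (simp add: fun_eq_iff)
  ultimately show ?case
    by (simp add: measurable_compose[of "state pol w k" M borel "pol k" borel])
qed

lemma order_qty_measurable:
  assumes "\<And>i. i \<le> k \<Longrightarrow> pol i \<in> borel_measurable borel"
    and "\<And>i. i < k \<Longrightarrow> w i \<in> borel_measurable M"
  shows "order_qty pol w k \<in> borel_measurable M"
proof -
  have "state pol w k \<in> borel_measurable M"
    using assms by (intro state_measurable) auto
  with assms(1)[of k] show ?thesis
    unfolding order_qty_def by (simp add: measurable_compose[of "state pol w k" M borel "pol k" borel])
qed

lemma state_restrict:
  "k \<le> n \<Longrightarrow> state pol w k \<omega> = state pol (\<lambda>i v. v i) k (\<lambda>i\<in>{..<n}. w i \<omega>)"
  by (induction k) auto

lemma (in prob_space) indep_var_state_demand: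
  assumes indep: "indep_vars (\<lambda>_. borel) w I" and "{..k} \<subseteq> I"
    and pol: "\<And>i. i < k \<Longrightarrow> pol i \<in> borel_measurable borel"
  shows "indep_var borel (state pol w k) borel (w k)"
proof -
  have "indep_var (PiM {..<k} (\<lambda>_. borel)) (\<lambda>\<omega>. \<lambda>i\<in>{..<k}. w i \<omega>)
      (PiM {k} (\<lambda>_. borel)) (\<lambda>\<omega>. \<lambda>i\<in>{k}. w i \<omega>)"
    using assms by (intro indep_var_restrict[OF indep]) auto
  moreover have "state pol (\<lambda>i v. v i) k \<in> borel_measurable (PiM {..<k} (\<lambda>_. borel))"
    using pol by (intro state_measurable measurable_component_singleton) auto
  moreover have "(\<lambda>v. v k) \<in> borel_measurable (PiM {k} (\<lambda>_. borel))"
    by (rule measurable_component_singleton) simp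
  ultimately have "indep_var borel (state pol (\<lambda>i v. v i) k \<circ> (\<lambda>\<omega>. \<lambda>i\<in>{..<k}. w i \<omega>))
      borel ((\<lambda>v. v k) \<circ> (\<lambda>\<omega>. \<lambda>i\<in>{k}. w i \<omega>))"
    by (rule indep_var_compose)
  then show ?thesis
    by (simp add: comp_def state_restrict[of k k, symmetric])
qed

lemma admissible_AE_state_nonneg:
  assumes "admissible M w N pol" "k \<le> N"
  shows "AE \<omega> in M. 0 \<le> state pol w k \<omega>"
  using assms by (cases "k = 0") (auto simp: admissible_def)

lemma admissible_AE_order_qty_nonneg:
  assumes adm: "admissible M w N pol" and k: "k < N"
  shows "AE \<omega> in M. 0 \<le> order_qty pol w k \<omega>"
proof -
  have "\<And>x. 0 \<le> x \<Longrightarrow> 0 \<le> pol k x"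
    using adm k by (auto simp: admissible_def is_policy_def)
  moreover have "AE \<omega> in M. 0 \<le> state pol w k \<omega>"
    using adm k by (intro admissible_AE_state_nonneg) auto
  ultimately show ?thesis
    by (auto simp: order_qty_def elim!: eventually_mono)
qed

lemma (in prob_space) expectation_total_order_ge:
  assumes adm: "admissible M w (Suc n) pol" and indep: "indep_vars (\<lambda>_. borel) w {..n}"
    and int_w: "\<And>k. k < n \<Longrightarrow> integrable M (w k)"
    and int_u: "\<And>k. k \<le> n \<Longrightarrow> integrable M (order_qty pol w k)"
    and c: "c \<in> rv_support M (w n)"
  shows "c + (\<Sum>k<n. expectation (w k)) \<le> (\<Sum>k\<le>n. expectation (order_qty pol w k))"
proof -
  define Y where "Y = (\<lambda>\<omega>. state pol w n \<omega> + order_qty pol w n \<omega>)"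
  have pol: "\<And>k. k \<le> n \<Longrightarrow> pol k \<in> borel_measurable borel"
    using adm by (auto simp: admissible_def is_policy_def)
  have "indep_var borel ((\<lambda>x. x + pol n x) \<circ> state pol w n) borel (id \<circ> w n)"
    using pol by (intro indep_var_compose[OF indep_var_state_demand[OF indep]]) auto
  then have "indep_var borel Y borel (w n)"
    by (simp add: comp_def Y_def order_qty_def)
  moreover have "AE \<omega> in M. w n \<omega> \<le> Y \<omega>"
  proof -
    have "AE \<omega> in M. 0 \<le> state pol w (Suc n) \<omega>"
      by (rule admissible_AE_state_nonneg[OF adm]) simp
    then show ?thesis
      by eventually_elim (simp add: Y_def order_qty_def)
  qed
  ultimately have Y_ge: "AE \<omega> in M. c \<le> Y \<omega>"
    using c by (rule AE_ge_support_if_indep_le)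
  have Y_eq: "Y = (\<lambda>\<omega>. (\<Sum>k\<le>n. order_qty pol w k \<omega>) - (\<Sum>k<n. w k \<omega>))"
    by (simp add: fun_eq_iff Y_def state_eq_sum sum_subtractf flip: lessThan_Suc_atMost)
  have int_Y: "integrable M Y"
    unfolding Y_eq using int_u int_w
    by (intro Bochner_Integration.integrable_diff Bochner_Integration.integrable_sum) auto
  have "expectation (\<lambda>_. c) \<le> expectation Y"
    using Y_ge int_Y by (intro integral_mono_AE) auto
  then have "c \<le> expectation Y"
    by (simp add: prob_space)
  also have "expectation Y
      = expectation (\<lambda>\<omega>. \<Sum>k\<le>n. order_qty pol w k \<omega>) - expectation (\<lambda>\<omega>. \<Sum>k<n. w k \<omega>)"
    unfolding Y_eq using int_u int_w by (intro Bochner_Integration.integral_diff) auto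
  also have "\<dots> = (\<Sum>k\<le>n. expectation (order_qty pol w k)) - (\<Sum>k<n. expectation (w k))"
    using int_u int_w by (simp add: Bochner_Integration.integral_sum)
  finally show ?thesis by simp
qed

lemma (in prob_space) order_cost_lower_bound:
  fixes f :: "real \<Rightarrow> real"
  assumes adm: "admissible M w (Suc n) pol" and indep: "indep_vars (\<lambda>_. borel) w {..n}"
    and int_w: "\<And>k. k < n \<Longrightarrow> integrable M (w k)" and c: "c \<in> rv_support M (w n)"
    and f: "convex_on UNIV f" "mono f" "f 0 = 0" "0 < f 1" "\<And>x. 0 \<le> f x"
  shows "ennreal (Suc n * f ((c + (\<Sum>k<n. expectation (w k))) / Suc n))
           \<le> (\<Sum>k\<le>n. \<integral>\<^sup>+\<omega>. f (order_qty pol w k \<omega>) \<partial>M)"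
proof -
  have u_meas: "order_qty pol w k \<in> borel_measurable M" if "k \<le> n" for k
    using that adm indep
    by (intro order_qty_measurable) (auto simp: admissible_def is_policy_def indep_vars_def)
  have f_meas: "f \<in> borel_measurable borel"
    using f(2) by (rule borel_measurable_mono)
  show ?thesis
  proof (cases "\<forall>k\<le>n. integrable M (\<lambda>\<omega>. f (order_qty pol w k \<omega>))")
    case True
    have u_nonneg: "AE \<omega> in M. 0 \<le> order_qty pol w k \<omega>" if "k \<le> n" for k
      using that by (intro admissible_AE_order_qty_nonneg[OF adm]) auto
    have "convex_on {0..} f"
      using f(1) by (rule convex_on_subset) (auto simp: convex_real_interval)
    then have int_u: "integrable M (order_qty pol w k)" if "k \<le> n" for k
    proof (rule integrable_if_convex_comp_integrable[OF _ f(3,4)])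
      show "0 \<le> f x" for x
        by (rule f(5))
    qed (use that True in \<open>auto intro: u_meas u_nonneg\<close>)
    have "card {..n} * f ((c + (\<Sum>k<n. expectation (w k))) / card {..n})
          \<le> (\<Sum>k\<le>n. f (expectation (order_qty pol w k)))"
      by (rule sum_convex_mono_ge_mean[OF f(1,2)])
        (use expectation_total_order_ge[OF adm indep int_w int_u c] in auto)
    also have "\<dots> \<le> (\<Sum>k\<le>n. expectation (\<lambda>\<omega>. f (order_qty pol w k \<omega>)))"
      using True int_u f(1) by (intro sum_mono jensens_inequality[where I = UNIV]) auto
    finally have "Suc n * f ((c + (\<Sum>k<n. expectation (w k))) / Suc n)
        \<le> (\<Sum>k\<le>n. expectation (\<lambda>\<omega>. f (order_qty pol w k \<omega>)))"
      by simp
    moreover have "(\<Sum>k\<le>n. \<integral>\<^sup>+\<omega>. f (order_qty pol w k \<omega>) \<partial>M)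
        = ennreal (\<Sum>k\<le>n. expectation (\<lambda>\<omega>. f (order_qty pol w k \<omega>)))"
    proof -
      have "(\<Sum>k\<le>n. \<integral>\<^sup>+\<omega>. f (order_qty pol w k \<omega>) \<partial>M)
          = (\<Sum>k\<le>n. ennreal (expectation (\<lambda>\<omega>. f (order_qty pol w k \<omega>))))"
        using True f(5) by (intro sum.cong refl nn_integral_eq_integral) auto
      also have "\<dots> = ennreal (\<Sum>k\<le>n. expectation (\<lambda>\<omega>. f (order_qty pol w k \<omega>)))"
        using f(5) by (intro sum_ennreal Bochner_Integration.integral_nonneg)
      finally show ?thesis .
    qed
    ultimately show ?thesis
      by (simp add: ennreal_leI)
  next
    case False
    then obtain k where "k \<le> n" "\<not> integrable M (\<lambda>\<omega>. f (order_qty pol w k \<omega>))" by auto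
    then have "\<not> (\<integral>\<^sup>+\<omega>. f (order_qty pol w k \<omega>) \<partial>M) < \<top>"
      using integrableI_nonneg[OF measurable_compose[OF u_meas f_meas]] f(5) by auto
    then have "(\<integral>\<^sup>+\<omega>. f (order_qty pol w k \<omega>) \<partial>M) = \<top>"
      by (simp add: less_top[symmetric])
    with \<open>k \<le> n\<close> have "(\<Sum>k\<le>n. \<integral>\<^sup>+\<omega>. f (order_qty pol w k \<omega>) \<partial>M) = \<top>"
      by (subst ennreal_sum_eq_top) auto
    then show ?thesis
      by (simp only: top_greatest)
  qed
qed

lemma (in prob_space) cost_lower_bound:
  fixes f :: "real \<Rightarrow> real"
  assumes adm: "admissible M w (Suc n) pol" and indep: "indep_vars (\<lambda>_. borel) w {..n}"
    and int_w: "\<And>k. k < n \<Longrightarrow> integrable M (w k)" and c: "c \<in> rv_support M (w n)"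
    and f: "convex_on {0..} f" "mono_on {0..} f" "f 0 = 0" "0 < f 1" "\<And>x. 0 \<le> x \<Longrightarrow> 0 \<le> f x"
    and mean: "0 \<le> c + (\<Sum>k<n. expectation (w k))"
  shows "ennreal (Suc n * f ((c + (\<Sum>k<n. expectation (w k))) / Suc n)) \<le> cost M f w (Suc n) pol"
proof -
  define H where "H = (\<lambda>x. f (max x 0))"
  have H_convex: "convex_on UNIV H"
    unfolding H_def using f(1,2) by (rule convex_on_comp_max_zero)
  have H_mono: "mono H"
    unfolding H_def by (intro monoI mono_onD[OF f(2)]) auto
  have H_nonneg: "\<And>x. 0 \<le> H x"
    using f(5) by (simp add: H_def)
  have "cost M f w (Suc n) pol = (\<Sum>k<Suc n. \<integral>\<^sup>+\<omega>. H (order_qty pol w k \<omega>) \<partial>M)"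
    unfolding cost_def
  proof (intro sum.cong refl nn_integral_cong_AE)
    fix k assume "k \<in> {..<Suc n}"
    with admissible_AE_order_qty_nonneg[OF adm]
    have "AE \<omega> in M. 0 \<le> order_qty pol w k \<omega>" by simp
    then show "AE \<omega> in M. ennreal (f (pol k (state pol w k \<omega>))) = H (order_qty pol w k \<omega>)"
      by eventually_elim (simp add: H_def order_qty_def)
  qed
  moreover have "f ((c + (\<Sum>k<n. expectation (w k))) / Suc n) = H ((c + (\<Sum>k<n. expectation (w k))) / Suc n)"
    using mean by (simp add: H_def)
  ultimately show ?thesis
    using order_cost_lower_bound[OF adm indep int_w c H_convex H_mono _ _ H_nonneg] f(3,4)
    by (simp add: H_def lessThan_Suc_atMost)
qed

theorem mainTheorem6:
  fixes M :: "'a measure" and G :: "real \<Rightarrow> real" and w :: "nat \<Rightarrow> 'a \<Rightarrow> real"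
    and \<mu> \<sigma> :: "nat \<Rightarrow> real" and \<Delta> :: real and N :: nat
  assumes "prob_space M"
    and "N \<ge> 1"
    and "strict_convex_on {0..} G"
    and "strict_mono_on {0..} G"
    and "G 0 = 0"
    and "\<forall>x\<ge>0. G x \<ge> 0"
    and "\<forall>k<N. w k \<in> borel_measurable M"
    and "prob_space.indep_vars M (\<lambda>_. borel) w {..<N}"
    and "\<forall>k<N. integrable M (w k) \<and> prob_space.expectation M (w k) = \<mu> k"
    and "\<forall>k<N. prob_space.variance M (w k) = (\<sigma> k)\<^sup>2"
    and "\<Delta> \<ge> 0"
    and "\<forall>k<N. \<mu> k - \<Delta> > 0"
    and "\<forall>k<N. rv_support M (w k) = {\<mu> k - \<Delta> .. \<mu> k + \<Delta>}"
  shows "(\<forall>pol. admissible M w N pol \<longrightarrow>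
            ennreal (real N * G ((\<Delta> + (\<Sum>k<N. \<mu> k)) / real N)) \<le> cost M G w N pol)
         \<and> ennreal (real N * G ((\<Delta> + (\<Sum>k<N. \<mu> k)) / real N)) \<le> opt_cost M G w N"
proof -
  interpret prob_space M by fact
  obtain n where N: "N = Suc n"
    using \<open>N \<ge> 1\<close> by (cases N) auto
  have Ew: "(\<Sum>k<n. expectation (w k)) = (\<Sum>k<n. \<mu> k)"
    using assms(9) N by (intro sum.cong) auto
  then have mean: "(\<Delta> + (\<Sum>k<N. \<mu> k)) / N = (\<mu> n + \<Delta> + (\<Sum>k<n. expectation (w k))) / Suc n"
    by (simp add: N algebra_simps)
  have bound: "ennreal (N * G ((\<Delta> + (\<Sum>k<N. \<mu> k)) / N)) \<le> cost M G w N pol"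
    if adm: "admissible M w N pol" for pol
    unfolding mean unfolding N
  proof (rule cost_lower_bound[OF adm[unfolded N]])
    show "indep_vars (\<lambda>_. borel) w {..n}"
      using assms(8) by (simp add: N lessThan_Suc_atMost)
    show "\<mu> n + \<Delta> \<in> rv_support M (w n)"
      using assms(11,13) N by auto
    show "0 \<le> \<mu> n + \<Delta> + (\<Sum>k<n. expectation (w k))"
    proof -
      have "0 \<le> \<mu> k" if "k \<le> n" for k
        using assms(11) assms(12)[rule_format, of k] that N by linarith
      then show ?thesis
        unfolding Ew using assms(11) by (intro add_nonneg_nonneg sum_nonneg) auto
    qed
    show "0 < G 1"
      using strict_mono_onD[OF assms(4), of 0 1] assms(5) by simp
  qed (use assms strict_convex_on_imp_convex_on strict_mono_on_imp_mono_on N in auto)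
  then show ?thesis
    unfolding opt_cost_def by (auto intro!: INF_greatest)
qed

end
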